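(* Let $n\ge1$ and $p\in H_3(\mathbb{C}^n)$ be arbitrary. Then there exist: - an invertible linear change of variables $y_j=\sum_{k=1}^n\lambda_{jk}x_k$ ($1\le j\le n$); - $n$ linear forms $\ell_1,\dots,\ell_n\in H_1(\mathbb{C}^n)$; - a cubic form $q$ in the $n-1$ variables $y_2,\dots,y_n$, such that $$p(x_1,\dots,x_n) = \sum_{j=1}^n \ell_j^3(x_1,\dots,x_n) + q(y_2,\dots,y_n).$$ Consequently, every cubic form in $n$ variables over $\mathbb{C}$ is a sum of at most $\binom{n+1}{2}$ cubes of linear forms.
   Context: $H_d(\mathbb{C}^n)$ denotes the complex vector space of homogeneous polynomials of degree $d$ in $n$ variables. *)

theory Defs
  imports Complex_Main
begin

text \<open>Polynomials in variables x_0, ..., x_{n-1} over the complex numbers are represented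
  by their polynomial functions on points (nat \<Rightarrow> complex); only coordinates below n matter.\<close>

definition linear_form :: "nat \<Rightarrow> ((nat \<Rightarrow> complex) \<Rightarrow> complex) \<Rightarrow> bool" where
  "linear_form n l \<longleftrightarrow> (\<exists>a :: nat \<Rightarrow> complex. \<forall>x. l x = (\<Sum>k<n. a k * x k))"

definition cubic_form_on :: "nat set \<Rightarrow> ((nat \<Rightarrow> complex) \<Rightarrow> complex) \<Rightarrow> bool" where
  "cubic_form_on V q \<longleftrightarrow> (\<exists>c :: nat \<Rightarrow> nat \<Rightarrow> nat \<Rightarrow> complex.
      \<forall>x. q x = (\<Sum>i\<in>V. \<Sum>j\<in>V. \<Sum>k\<in>V. c i j k * x i * x j * x k))"

definition cubic_form :: "nat \<Rightarrow> ((nat \<Rightarrow> complex) \<Rightarrow> complex) \<Rightarrow> bool" where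
  "cubic_form n q \<longleftrightarrow> cubic_form_on {..<n} q"

end

theory Submission
  imports Defs
begin

text \<open>
  Let p be a cubic form in n variables.  If p = 0 there is nothing to do.  Otherwise
  pick v with \<gamma> = p v \<noteq> 0 and expand p along v:
    p(x + t v) = p x + 3 t G x + 3 t^2 H x + t^3 \<gamma>,
  with G quadratic, H linear and H v = \<gamma>.  The quadratic form G - H^2/\<gamma> is invariant under
  translation along v, so by diagonalisation over \<complex> it is a sum of n - 1 squares of linear forms
  vanishing at v.  Using cube roots, H^2/\<gamma> + (those squares) is rewritten as \<Sum> L_j(v) L_j^2 for
  n linear forms L_j.  Comparing expansions along v shows that then p - \<Sum> L_j^3 is invariant
  under translation along v, hence a cubic form q in the n - 1 coordinates y_1, ..., y_(n-1) of a
  change of variables adapted to v.  Iterating on q bounds the number of cubes by (n+1) choose 2.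
\<close>

definition lform :: "nat set \<Rightarrow> (nat \<Rightarrow> complex) \<Rightarrow> (nat \<Rightarrow> complex) \<Rightarrow> complex" where
  "lform V a x = (\<Sum>k\<in>V. a k * x k)"

definition qform :: "nat set \<Rightarrow> (nat \<Rightarrow> nat \<Rightarrow> complex) \<Rightarrow> (nat \<Rightarrow> complex) \<Rightarrow> complex" where
  "qform V g x = (\<Sum>j\<in>V. \<Sum>k\<in>V. g j k * x j * x k)"

definition cform :: "nat set \<Rightarrow> (nat \<Rightarrow> nat \<Rightarrow> nat \<Rightarrow> complex) \<Rightarrow> (nat \<Rightarrow> complex) \<Rightarrow> complex" where
  "cform V c x = (\<Sum>i\<in>V. \<Sum>j\<in>V. \<Sum>k\<in>V. c i j k * x i * x j * x k)"

definition shift :: "(nat \<Rightarrow> complex) \<Rightarrow> complex \<Rightarrow> (nat \<Rightarrow> complex) \<Rightarrow> nat \<Rightarrow> complex" where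
  "shift x t v = (\<lambda>k. x k + t * v k)"

lemma shift_shift: "shift (shift x s v) t v = shift x (s + t) v"
  by (simp add: shift_def fun_eq_iff algebra_simps)

lemma linear_form_iff_lform: "linear_form n l \<longleftrightarrow> (\<exists>a. \<forall>x. l x = lform {..<n} a x)"
  by (simp add: linear_form_def lform_def)

lemma cubic_form_on_iff_cform: "cubic_form_on V q \<longleftrightarrow> (\<exists>c. \<forall>x. q x = cform V c x)"
  by (simp add: cubic_form_on_def cform_def)

lemma lform_shift: "lform V a (shift x t v) = lform V a x + t * lform V a v"
  by (simp add: lform_def shift_def sum.distrib sum_distrib_left algebra_simps)

lemma linear_form_shift: "linear_form n l \<Longrightarrow> l (shift x t v) = l x + t * l v"
  by (auto simp: linear_form_iff_lform lform_shift)

lemma linear_form_comb: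
  assumes "linear_form n f" "linear_form n g"
  shows "linear_form n (\<lambda>x. a * f x + b * g x)"
proof -
  obtain u w where "\<forall>x. f x = lform {..<n} u x" "\<forall>x. g x = lform {..<n} w x"
    using assms by (auto simp: linear_form_iff_lform)
  then have "\<forall>x. a * f x + b * g x = lform {..<n} (\<lambda>k. a * u k + b * w k) x"
    by (simp add: lform_def sum.distrib sum_distrib_left algebra_simps)
  then show ?thesis by (auto simp: linear_form_iff_lform)
qed

lemma linear_form_scale: "linear_form n f \<Longrightarrow> linear_form n (\<lambda>x. a * f x)"
  using linear_form_comb[of n f f a 0] by simp

lemma linear_form_comp:
  assumes "linear_form n f"
  shows "linear_form N (\<lambda>x. f (\<lambda>k. \<Sum>l<N. B k l * x l))"
proof -
  obtain a where a: "\<And>x. f x = (\<Sum>k<n. a k * x k)" using assms unfolding linear_form_def by blast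
  have "f (\<lambda>k. \<Sum>l<N. B k l * x l) = (\<Sum>l<N. (\<Sum>k<n. a k * B k l) * x l)" for x
    unfolding a by (simp add: sum_distrib_left sum_distrib_right mult_ac sum.swap[of _ "{..<n}"])
  then show ?thesis unfolding linear_form_def by (intro exI[of _ "\<lambda>l. \<Sum>k<n. a k * B k l"]) blast
qed

text \<open>Every complex number has a cube root; this is where algebraic closedness enters.\<close>
lemma complex_cube_root: "\<exists>c::complex. c ^ 3 = z"
proof -
  have "(rcis (root 3 (cmod z)) (Arg z / 3)) ^ 3 = z"
    by (simp add: DeMoivre2 rcis_cmod_Arg)
  then show ?thesis by blast
qed

lemma lform_remove:
  assumes "finite V" "r \<in> V"
  shows "lform V a z = a r * z r + lform (V - {r}) a z"
  using assms by (simp add: lform_def sum.remove)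

lemma lform_cong: "(\<And>k. k \<in> V \<Longrightarrow> a k = b k) \<Longrightarrow> lform V a z = lform V b z"
  by (simp add: lform_def)

lemma lform_square: "(lform V a x)^2 = (\<Sum>j\<in>V. \<Sum>k\<in>V. a j * a k * x j * x k)"
  by (simp add: lform_def power2_eq_square sum_product mult_ac)

lemma lform_cube: "(lform V a x)^3 = cform V (\<lambda>i j k. a i * a j * a k) x"
  unfolding cform_def lform_def
  by (simp add: power3_eq_cube sum_product sum_distrib_left sum_distrib_right mult_ac)

lemma qform_zero [simp]: "qform V g (\<lambda>k. 0) = 0"
  by (simp add: qform_def)

lemma sum_drop_vanishing:
  assumes "finite V" "r \<in> V" "h r = 0"
  shows "sum h V = sum h (V - {r})"
  using sum.remove[OF assms(1,2), of h] assms(3) by simp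

lemma qform_remove:
  assumes "finite V" "r \<in> V" "z r = 0"
  shows "qform V g z = qform (V - {r}) g z"
proof -
  have "qform V g z = (\<Sum>j\<in>V. \<Sum>k\<in>V-{r}. g j k * z j * z k)"
    unfolding qform_def using assms by (intro sum.cong refl sum_drop_vanishing) simp_all
  also have "\<dots> = qform (V - {r}) g z"
    unfolding qform_def using assms by (intro sum_drop_vanishing) simp_all
  finally show ?thesis .
qed

lemma cform_remove:
  assumes "finite V" "r \<in> V" "z r = 0"
  shows "cform V c z = cform (V - {r}) c z"
proof -
  have "cform V c z = (\<Sum>i\<in>V. \<Sum>j\<in>V. \<Sum>k\<in>V-{r}. c i j k * z i * z j * z k)"
    unfolding cform_def using assms by (intro sum.cong refl sum_drop_vanishing) simp_all
  also have "\<dots> = (\<Sum>i\<in>V. \<Sum>j\<in>V-{r}. \<Sum>k\<in>V-{r}. c i j k * z i * z j * z k)"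
    using assms by (intro sum.cong refl sum_drop_vanishing) simp_all
  also have "\<dots> = cform (V - {r}) c z"
    unfolding cform_def using assms by (intro sum_drop_vanishing) simp_all
  finally show ?thesis .
qed

text \<open>Moving a point along w until its r-th coordinate vanishes.  A function invariant under
  translations along w only depends on this projection, which is how a variable is eliminated.\<close>
definition proj_along :: "(nat \<Rightarrow> complex) \<Rightarrow> nat \<Rightarrow> (nat \<Rightarrow> complex) \<Rightarrow> nat \<Rightarrow> complex" where
  "proj_along w r x = shift x (- x r / w r) w"

lemma proj_along_coord: "w r \<noteq> 0 \<Longrightarrow> proj_along w r x r = 0"
  by (simp add: proj_along_def shift_def)

lemma proj_along_self: "w r \<noteq> 0 \<Longrightarrow> proj_along w r w = (\<lambda>k. 0)"
  by (simp add: proj_along_def shift_def)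

lemma invariant_proj_along:
  "(\<And>x t. f (shift x t w) = f x) \<Longrightarrow> f (proj_along w r x) = f x"
  by (simp add: proj_along_def)

lemma qform_shift:
  "qform V g (shift x t v) =
     qform V g x + 2 * t * (lform V (\<lambda>k. \<Sum>j\<in>V. (g j k + g k j) * v j) x / 2) + t^2 * qform V g v"
proof -
  have e: "\<And>j k. g j k * shift x t v j * shift x t v k = g j k * x j * x k + t * (g j k * v j * x k)
      + t * (g j k * x j * v k) + t^2 * (g j k * v j * v k)"
    by (simp add: shift_def algebra_simps power2_eq_square)
  have "qform V g (shift x t v) = qform V g x + t * (\<Sum>j\<in>V. \<Sum>k\<in>V. g j k * v j * x k)
      + t * (\<Sum>j\<in>V. \<Sum>k\<in>V. g j k * x j * v k) + t^2 * qform V g v"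
    unfolding qform_def e by (simp add: sum.distrib sum_distrib_left)
  moreover have "(\<Sum>j\<in>V. \<Sum>k\<in>V. g j k * x j * v k) = (\<Sum>k\<in>V. \<Sum>j\<in>V. g k j * v j * x k)"
    by (simp add: mult_ac)
  moreover have "lform V (\<lambda>k. \<Sum>j\<in>V. (g j k + g k j) * v j) x
      = (\<Sum>j\<in>V. \<Sum>k\<in>V. g j k * v j * x k) + (\<Sum>k\<in>V. \<Sum>j\<in>V. g k j * v j * x k)"
    unfolding lform_def
    by (subst sum.swap) (simp add: sum.distrib sum_distrib_left sum_distrib_right algebra_simps)
  ultimately show ?thesis by (simp add: algebra_simps)
qed

lemma qform_minus_square:
  "qform V g x - (lform V \<eta> x)^2 / \<gamma> = qform V (\<lambda>j k. g j k - \<eta> j * \<eta> k / \<gamma>) x"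
  by (simp add: qform_def lform_square sum_divide_distrib sum_subtractf algebra_simps)

lemma complete_square_invariant:
  fixes Q H :: "(nat \<Rightarrow> complex) \<Rightarrow> complex"
  assumes "\<And>x t. Q (shift x t w) = Q x + 2 * t * H x + t^2 * \<gamma>"
    and "\<And>x t. H (shift x t w) = H x + t * \<gamma>" and "\<gamma> \<noteq> 0"
  shows "Q (shift x t w) - (H (shift x t w))^2 / \<gamma> = Q x - (H x)^2 / \<gamma>"
  using assms by (simp add: field_simps power2_eq_square)

lemma invariant_quadratic_squares:
  assumes fin: "finite V" and r: "r \<in> V" "w r \<noteq> 0"
    and inv: "\<And>x t. qform V g (shift x t w) = qform V g x"
    and squares: "\<And>g'. \<exists>b. \<forall>z. qform (V - {r}) g' z = (\<Sum>t<card (V - {r}). (lform (V - {r}) (b t) z)^2)"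
  shows "\<exists>b. (\<forall>x. qform V g x = (\<Sum>t<card V - 1. (lform V (b t) x)^2)) \<and> (\<forall>t. lform V (b t) w = 0)"
proof -
  define W where "W = V - {r}"
  obtain b' where b': "\<And>z. qform W g z = (\<Sum>t<card W. (lform W (b' t) z)^2)"
    using squares W_def by blast
  define \<beta> where "\<beta> t k = (if k = r then - lform W (b' t) w / w r else b' t k)" for t k
  have \<beta>_proj: "lform V (\<beta> t) x = lform W (b' t) (proj_along w r x)" for t x
  proof -
    have "lform V (\<beta> t) x = \<beta> t r * x r + lform W (\<beta> t) x"
      unfolding W_def by (rule lform_remove[OF fin r(1)])
    moreover have "lform W (\<beta> t) x = lform W (b' t) x" by (rule lform_cong) (simp add: \<beta>_def W_def)
    moreover have "\<beta> t r = - lform W (b' t) w / w r" by (simp add: \<beta>_def)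
    ultimately show ?thesis by (simp add: proj_along_def lform_shift algebra_simps)
  qed
  have card_W: "card W = card V - 1" using fin r by (simp add: W_def)
  show ?thesis
  proof (intro exI conjI allI)
    fix x
    have "qform V g x = qform V g (proj_along w r x)" using inv by (simp add: invariant_proj_along)
    also have "\<dots> = qform W g (proj_along w r x)"
      unfolding W_def using fin r by (intro qform_remove) (simp_all add: proj_along_coord)
    also have "\<dots> = (\<Sum>t<card V - 1. (lform V (\<beta> t) x)^2)" by (simp add: b' \<beta>_proj card_W)
    finally show "qform V g x = (\<Sum>t<card V - 1. (lform V (\<beta> t) x)^2)" .
  next
    fix t
    show "lform V (\<beta> t) w = 0" unfolding \<beta>_proj proj_along_self[of w r, OF r(2)] by (simp add: lform_def)
  qed
qed

lemma qform_nonzero_coordinate: "qform V g w \<noteq> 0 \<Longrightarrow> \<exists>r\<in>V. w r \<noteq> 0"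
  by (rule ccontr) (simp add: qform_def)

lemma cform_nonzero_coordinate: "cform V c w \<noteq> 0 \<Longrightarrow> \<exists>r\<in>V. w r \<noteq> 0"
  by (rule ccontr) (simp add: cform_def)

text \<open>Completing the square along w: if Q w \<noteq> 0, then Q = a^2 + Q' for a linear form a and a
  quadratic form Q' invariant under translations along w (a = H / sqrt(Q w), H the polar form).\<close>
lemma complete_square_along:
  assumes "qform V g w \<noteq> 0"
  shows "\<exists>a g'. (\<forall>x. qform V g x = (lform V a x)^2 + qform V g' x)
                \<and> (\<forall>x t. qform V g' (shift x t w) = qform V g' x)"
proof -
  define \<gamma> where "\<gamma> = qform V g w"
  have \<gamma>: "\<gamma> \<noteq> 0" using assms \<gamma>_def by simp
  define \<eta> where "\<eta> = (\<lambda>k. \<Sum>j\<in>V. (g j k + g k j) * w j)"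
  define H where "H x = lform V \<eta> x / 2" for x
  have Q_shift: "qform V g (shift x t w) = qform V g x + 2 * t * H x + t^2 * \<gamma>" for x t
    using qform_shift[of V g x t w] by (simp add: H_def \<eta>_def \<gamma>_def)
  have "0 = \<gamma> - 2 * H w + \<gamma>"
    using Q_shift[of w "-1"] by (simp add: \<gamma>_def shift_def)
  then have "H w = \<gamma>" by simp
  then have H_shift: "H (shift x t w) = H x + t * \<gamma>" for x t
    by (simp add: H_def lform_shift field_simps)
  define g' where "g' j k = g j k - (\<eta> j / 2) * (\<eta> k / 2) / \<gamma>" for j k
  have H_half: "H x = lform V (\<lambda>k. \<eta> k / 2) x" for x
    by (simp add: H_def lform_def sum_divide_distrib)
  have g': "qform V g' x = qform V g x - (H x)^2 / \<gamma>" for x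
    unfolding g'_def H_half qform_minus_square ..
  obtain c where c: "c^2 = \<gamma>" using power2_csqrt by blast
  have "lform V (\<lambda>k. \<eta> k / (2 * c)) x = H x / c" for x
    by (simp add: H_def lform_def sum_divide_distrib)
  then have "qform V g x = (lform V (\<lambda>k. \<eta> k / (2 * c)) x)^2 + qform V g' x" for x
    using c g'[of x] by (simp add: power_divide)
  moreover have "qform V g' (shift x t w) = qform V g' x" for x t
    using complete_square_invariant[OF Q_shift H_shift \<gamma>] by (simp add: g')
  ultimately show ?thesis by blast
qed

text \<open>By induction on card V: complete the square along some w with Q w \<noteq> 0 and eliminate
  a variable from the invariant remainder.\<close>
lemma quadratic_sum_of_squares:
  "finite V \<Longrightarrow> \<exists>b. \<forall>x. qform V g x = (\<Sum>t<card V. (lform V (b t) x)^2)"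
proof (induction "card V" arbitrary: V g rule: less_induct)
  case less
  show ?case
  proof (cases "\<forall>x. qform V g x = 0")
    case True
    then show ?thesis by (intro exI[of _ "\<lambda>_ _. 0"]) (simp add: lform_def)
  next
    case False
    then obtain w where w: "qform V g w \<noteq> 0" by blast
    then obtain r where r: "r \<in> V" "w r \<noteq> 0" using qform_nonzero_coordinate by blast
    obtain a g' where a: "\<And>x. qform V g x = (lform V a x)^2 + qform V g' x"
      and inv: "\<And>x t. qform V g' (shift x t w) = qform V g' x"
      using complete_square_along[OF w] by blast
    have "card (V - {r}) < card V" using less.prems r(1) by (rule card_Diff1_less)
    then have squares: "\<exists>b. \<forall>z. qform (V - {r}) g'' z = (\<Sum>t<card (V - {r}). (lform (V - {r}) (b t) z)^2)"
      for g'' using less.hyps less.prems by blast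
    obtain \<beta> where \<beta>: "\<And>x. qform V g' x = (\<Sum>t<card V - 1. (lform V (\<beta> t) x)^2)"
      using invariant_quadratic_squares[of V r w g', OF less.prems r inv squares] by blast
    have "0 < card V" using less.prems r(1) card_gt_0_iff by blast
    then have card_V: "card V = Suc (card V - 1)" by simp
    define b where "b t = (if t = 0 then a else \<beta> (t - 1))" for t
    have "qform V g x = (\<Sum>t<card V. (lform V (b t) x)^2)" for x
      unfolding a by (subst card_V, subst sum.lessThan_Suc_shift) (simp add: \<beta> b_def)
    then show ?thesis by blast
  qed
qed

text \<open>Inductively, h^2 w/2 and
  (h + s m_k)^2 w/2 with s^2 w = 1 combine to w h^2 + m_k^2, and a single term c L^2 with
  L(v) \<noteq> 0 is (c' L)(v) (c' L)^2 for a cube root c'^3 = c / L(v).\<close>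
lemma squares_as_weighted_squares:
  assumes "linear_form n h" "\<forall>i<k. linear_form n (m i)" "\<forall>i<k. m i v = 0" "h v \<noteq> 0" "w \<noteq> 0"
  shows "\<exists>L. (\<forall>j<Suc k. linear_form n (L j)) \<and>
     (\<forall>x. (\<Sum>j<Suc k. L j v * (L j x)^2) = w * (h x)^2 + (\<Sum>i<k. (m i x)^2))"
  using assms
proof (induction k arbitrary: h w)
  case 0
  obtain c where c: "c ^ 3 = w / h v" using complex_cube_root by blast
  show ?case
  proof (intro exI[of _ "\<lambda>j x. c * h x"] conjI allI impI)
    show "linear_form n (\<lambda>x. c * h x)" for j using linear_form_scale[OF 0(1)] .
    fix x
    have "c * h v * (c * h x)^2 = c^3 * h v * (h x)^2" by (simp add: power2_eq_square power3_eq_cube)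
    then show "(\<Sum>j<Suc 0. c * h v * (c * h x)\<^sup>2) = w * (h x)\<^sup>2 + (\<Sum>i<0. (m i x)\<^sup>2)"
      using c 0(4) by simp
  qed
next
  case (Suc k)
  define s where "s = 1 / csqrt w"
  have ws: "w * s^2 = 1" using Suc.prems(5) by (simp add: s_def power_divide)
  have m_k: "linear_form n (m k)" using Suc.prems(2) by simp
  define h' where "h' x = h x - s * m k x" for x
  have h': "linear_form n h'"
    unfolding h'_def using linear_form_comb[OF Suc.prems(1) m_k, of 1 "-s"] by simp
  have "h' v = h v" using Suc.prems(3) by (simp add: h'_def)
  then obtain L' where L': "\<forall>j<Suc k. linear_form n (L' j)"
    "\<forall>x. (\<Sum>j<Suc k. L' j v * (L' j x)^2) = w/2 * (h' x)^2 + (\<Sum>i<k. (m i x)^2)"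
    using Suc.IH[OF h', of "w/2"] Suc.prems by auto
  obtain c where c: "c ^ 3 = (w/2) / h v" using complex_cube_root by blast
  define h'' where "h'' x = c * (h x + s * m k x)" for x
  have h'': "linear_form n h''"
    unfolding h''_def by (intro linear_form_scale linear_form_comb[OF Suc.prems(1) m_k, of 1 s, simplified])
  define L where "L j = (if j = Suc k then h'' else L' j)" for j
  show ?case
  proof (intro exI[of _ L] conjI allI impI)
    show "linear_form n (L j)" if "j < Suc (Suc k)" for j
      using that L' h'' by (auto simp: L_def less_Suc_eq)
    fix x
    have "h'' v * (h'' x)^2 = c^3 * h v * (h x + s * m k x)^2"
      using Suc.prems(3) by (simp add: h''_def power2_eq_square power3_eq_cube)
    also have "\<dots> = w/2 * (h x + s * m k x)^2" using c Suc.prems(4) by simp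
    finally have "(\<Sum>j<Suc (Suc k). L j v * (L j x)^2)
        = (\<Sum>j<Suc k. L' j v * (L' j x)^2) + w/2 * (h x + s * m k x)^2"
      by (simp add: L_def)
    moreover have "w/2 * (h' x)^2 + w/2 * (h x + s * m k x)^2 = w * (h x)^2 + (w * s^2) * (m k x)^2"
      by (simp add: h'_def power2_eq_square algebra_simps)
    ultimately show "(\<Sum>j<Suc (Suc k). L j v * (L j x)^2) = w * (h x)^2 + (\<Sum>i<Suc k. (m i x)^2)"
      using L'(2) ws by simp
  qed
qed

text \<open>The terms of a cubic form along the line x + t v that are linear, resp. quadratic, in v.\<close>
definition polar_quad :: "nat set \<Rightarrow> (nat \<Rightarrow> nat \<Rightarrow> nat \<Rightarrow> complex) \<Rightarrow> (nat \<Rightarrow> complex) \<Rightarrow> (nat \<Rightarrow> complex) \<Rightarrow> complex" where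
  "polar_quad V c v x = (\<Sum>i\<in>V. \<Sum>j\<in>V. \<Sum>k\<in>V. c i j k * (v i * x j * x k + x i * v j * x k + x i * x j * v k))"

definition polar_lin :: "nat set \<Rightarrow> (nat \<Rightarrow> nat \<Rightarrow> nat \<Rightarrow> complex) \<Rightarrow> (nat \<Rightarrow> complex) \<Rightarrow> (nat \<Rightarrow> complex) \<Rightarrow> complex" where
  "polar_lin V c v x = (\<Sum>i\<in>V. \<Sum>j\<in>V. \<Sum>k\<in>V. c i j k * (v i * v j * x k + v i * x j * v k + x i * v j * v k))"

lemma cform_shift:
  "cform V c (shift x t v) = cform V c x + t * polar_quad V c v x + t^2 * polar_lin V c v x + t^3 * cform V c v"
proof -
  have e: "\<And>i j k. c i j k * shift x t v i * shift x t v j * shift x t v k =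
     c i j k * x i * x j * x k + t * (c i j k * (v i * x j * x k + x i * v j * x k + x i * x j * v k))
     + t^2 * (c i j k * (v i * v j * x k + v i * x j * v k + x i * v j * v k)) + t^3 * (c i j k * v i * v j * v k)"
    by (simp add: shift_def algebra_simps power2_eq_square power3_eq_cube)
  show ?thesis unfolding cform_def polar_quad_def polar_lin_def e by (simp add: sum.distrib sum_distrib_left)
qed

lemma sum_swap_outer3:
  "(\<Sum>i\<in>A. \<Sum>j\<in>B. \<Sum>k\<in>C. f i j k) = (\<Sum>j\<in>B. \<Sum>k\<in>C. \<Sum>i\<in>A. (f i j k :: complex))"
  by (rule trans[OF sum.swap], rule sum.cong[OF refl], rule sum.swap)

lemma sum_swap_inner3:
  "(\<Sum>i\<in>A. \<Sum>j\<in>B. \<Sum>k\<in>C. f i j k) = (\<Sum>i\<in>A. \<Sum>k\<in>C. \<Sum>j\<in>B. (f i j k :: complex))"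
  by (rule sum.cong[OF refl], rule sum.swap)

lemma polar_quad_qform: "\<exists>g. \<forall>x. polar_quad V c v x = qform V g x"
proof -
  define g where "g j k = (\<Sum>i\<in>V. (c i j k + c j i k + c j k i) * v i)" for j k
  have "polar_quad V c v x = qform V g x" for x
  proof -
    have s1: "(\<Sum>i\<in>V. \<Sum>j\<in>V. \<Sum>k\<in>V. c i j k * (v i * x j * x k))
        = (\<Sum>j\<in>V. \<Sum>k\<in>V. (\<Sum>i\<in>V. c i j k * v i) * x j * x k)"
      by (subst sum_swap_outer3) (simp add: sum_distrib_left sum_distrib_right mult_ac)
    have s2: "(\<Sum>i\<in>V. \<Sum>j\<in>V. \<Sum>k\<in>V. c i j k * (x i * v j * x k))
        = (\<Sum>j\<in>V. \<Sum>k\<in>V. (\<Sum>i\<in>V. c j i k * v i) * x j * x k)"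
      by (subst sum_swap_inner3) (simp add: sum_distrib_left sum_distrib_right mult_ac)
    have s3: "(\<Sum>i\<in>V. \<Sum>j\<in>V. \<Sum>k\<in>V. c i j k * (x i * x j * v k))
        = (\<Sum>j\<in>V. \<Sum>k\<in>V. (\<Sum>i\<in>V. c j k i * v i) * x j * x k)"
      by (simp add: sum_distrib_right sum_distrib_left mult_ac)
    show ?thesis unfolding polar_quad_def qform_def g_def
      by (simp only: distrib_left distrib_right sum.distrib s1 s2 s3)
  qed
  then show ?thesis by blast
qed

lemma polar_lin_lform: "\<exists>a. \<forall>x. polar_lin V c v x = lform V a x"
proof -
  define a where "a k = (\<Sum>i\<in>V. \<Sum>j\<in>V. (c i j k + c i k j + c k i j) * v i * v j)" for k
  have "polar_lin V c v x = lform V a x" for x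
  proof -
    have s1: "(\<Sum>i\<in>V. \<Sum>j\<in>V. \<Sum>k\<in>V. c i j k * (v i * v j * x k))
        = (\<Sum>k\<in>V. (\<Sum>i\<in>V. \<Sum>j\<in>V. c i j k * v i * v j) * x k)"
      by (subst sum_swap_outer3, subst sum_swap_outer3) (simp add: sum_distrib_left sum_distrib_right mult_ac)
    have s2: "(\<Sum>i\<in>V. \<Sum>j\<in>V. \<Sum>k\<in>V. c i j k * (v i * x j * v k))
        = (\<Sum>k\<in>V. (\<Sum>i\<in>V. \<Sum>j\<in>V. c i k j * v i * v j) * x k)"
      by (subst sum.swap) (simp add: sum_distrib_left sum_distrib_right mult_ac)
    have s3: "(\<Sum>i\<in>V. \<Sum>j\<in>V. \<Sum>k\<in>V. c i j k * (x i * v j * v k))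
        = (\<Sum>k\<in>V. (\<Sum>i\<in>V. \<Sum>j\<in>V. c k i j * v i * v j) * x k)"
      by (simp add: sum_distrib_right sum_distrib_left mult_ac)
    show ?thesis unfolding polar_lin_def lform_def a_def
      by (simp only: distrib_left distrib_right sum.distrib s1 s2 s3)
  qed
  then show ?thesis by blast
qed

lemma cform_expansion:
  "\<exists>g \<eta>. \<forall>x t. cform V c (shift x t v)
     = cform V c x + 3 * t * qform V g x + 3 * t^2 * lform V \<eta> x + t^3 * cform V c v"
proof -
  obtain g where g: "\<And>x. polar_quad V c v x = qform V g x" using polar_quad_qform by blast
  obtain a where a: "\<And>x. polar_lin V c v x = lform V a x" using polar_lin_lform by blast
  have "polar_quad V c v x = 3 * qform V (\<lambda>j k. g j k / 3) x" for x
    by (simp add: g qform_def sum_divide_distrib[symmetric])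
  moreover have "polar_lin V c v x = 3 * lform V (\<lambda>k. a k / 3) x" for x
    by (simp add: a lform_def sum_divide_distrib[symmetric])
  ultimately show ?thesis
    by (intro exI[of _ "\<lambda>j k. g j k / 3"] exI[of _ "\<lambda>k. a k / 3"]) (simp add: cform_shift)
qed

text \<open>This follows by comparing expansions at s \<plusminus> 1.\<close>
lemma cubic_along_line:
  fixes P G H :: "(nat \<Rightarrow> complex) \<Rightarrow> complex"
  assumes E: "\<And>x t. P (shift x t v) = P x + 3 * t * G x + 3 * t^2 * H x + t^3 * \<gamma>"
  shows "G (shift x s v) = G x + 2 * s * H x + s^2 * \<gamma>" and "H (shift x s v) = H x + s * \<gamma>"
proof -
  let ?y = "shift x s v"
  have "P x + 3*(s+1)*G x + 3*(s+1)^2*H x + (s+1)^3*\<gamma>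
      = (P x + 3*s*G x + 3*s^2*H x + s^3*\<gamma>) + 3*G ?y + 3*H ?y + \<gamma>"
    using E[of x "s+1"] E[of ?y 1] E[of x s] by (simp add: shift_shift)
  then have sum: "3*G ?y + 3*H ?y = 3*G x + 3*(2*s+1)*H x + (3*s^2+3*s)*\<gamma>"
    by (simp add: algebra_simps power2_eq_square power3_eq_cube)
  have "P x + 3*(s-1)*G x + 3*(s-1)^2*H x + (s-1)^3*\<gamma>
      = (P x + 3*s*G x + 3*s^2*H x + s^3*\<gamma>) - 3*G ?y + 3*H ?y - \<gamma>"
    using E[of x "s-1"] E[of ?y "-1"] E[of x s] by (simp add: shift_shift)
  then have diff: "3*H ?y - 3*G ?y = -3*G x + 3*(1-2*s)*H x + (3*s-3*s^2)*\<gamma>"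
    by (simp add: algebra_simps power2_eq_square power3_eq_cube)
  have "G ?y = ((3*G ?y + 3*H ?y) - (3*H ?y - 3*G ?y)) / 6" by simp
  also have "\<dots> = G x + 2 * s * H x + s^2 * \<gamma>"
    unfolding sum diff by (simp add: algebra_simps power2_eq_square)
  finally show "G ?y = G x + 2 * s * H x + s^2 * \<gamma>" .
  have "H ?y = ((3*G ?y + 3*H ?y) + (3*H ?y - 3*G ?y)) / 6" by simp
  also have "\<dots> = H x + s * \<gamma>"
    unfolding sum diff by (simp add: algebra_simps power2_eq_square)
  finally show "H ?y = H x + s * \<gamma>" .
qed

lemma sum_cubes_shift:
  fixes m :: nat
  assumes "\<forall>j<m. linear_form n (L j)"
  shows "(\<Sum>j<m. (L j (shift x t v))^3) = (\<Sum>j<m. (L j x)^3) + 3 * t * (\<Sum>j<m. L j v * (L j x)^2)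
           + 3 * t^2 * (\<Sum>j<m. (L j v)^2 * L j x) + t^3 * (\<Sum>j<m. (L j v)^3)"
proof -
  have "(\<Sum>j<m. (L j (shift x t v))^3) = (\<Sum>j<m. (L j x)^3 + 3 * t * (L j v * (L j x)^2)
           + 3 * t^2 * ((L j v)^2 * L j x) + t^3 * (L j v)^3)"
  proof (intro sum.cong refl)
    fix j assume "j \<in> {..<m}"
    then have "L j (shift x t v) = L j x + t * L j v" using assms linear_form_shift by auto
    then show "(L j (shift x t v))^3 = (L j x)^3 + 3 * t * (L j v * (L j x)^2)
           + 3 * t^2 * ((L j v)^2 * L j x) + t^3 * (L j v)^3"
      by (simp add: power2_eq_square power3_eq_cube algebra_simps)
  qed
  then show ?thesis by (simp add: sum.distrib sum_distrib_left)
qed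

text \<open>If the linear forms L_j reproduce the quadratic coefficient G of p along v, i.e.
  \<Sum> L_j(v) L_j^2 = G, then they also reproduce the other coefficients, so that
  p - \<Sum> L_j^3 is invariant under translations along v.\<close>
lemma cubes_remainder_invariant:
  fixes m :: nat
  assumes E: "\<And>x t. p (shift x t v) = p x + 3 * t * G x + 3 * t^2 * H x + t^3 * \<gamma>"
    and L: "\<forall>j<m. linear_form n (L j)"
    and match: "\<And>x. (\<Sum>j<m. L j v * (L j x)^2) = G x"
  shows "p (shift x t v) - (\<Sum>j<m. (L j (shift x t v))^3) = p x - (\<Sum>j<m. (L j x)^3)"
proof -
  define H' where "H' x = (\<Sum>j<m. (L j v)^2 * L j x)" for x
  define \<gamma>' where "\<gamma>' = (\<Sum>j<m. (L j v)^3)"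
  have E': "(\<Sum>j<m. (L j (shift x t v))^3) = (\<Sum>j<m. (L j x)^3) + 3 * t * G x + 3 * t^2 * H' x + t^3 * \<gamma>'"
    for x t using sum_cubes_shift[OF L] by (simp add: match H'_def \<gamma>'_def)
  have "G x + 2 * s * H x + s^2 * \<gamma> = G x + 2 * s * H' x + s^2 * \<gamma>'" for s
    using cubic_along_line(1)[OF E, of x s] cubic_along_line(1)[OF E', of x s] by simp
  from this[of 1] this[of "-1"]
  have plus: "\<gamma> + 2 * H x = \<gamma>' + 2 * H' x" and minus: "\<gamma> - 2 * H x = \<gamma>' - 2 * H' x"
    by (simp_all add: algebra_simps)
  have "4 * H x = (\<gamma> + 2 * H x) - (\<gamma> - 2 * H x)" by simp
  also have "\<dots> = 4 * H' x" unfolding plus minus by simp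
  finally have "H' x = H x" by simp
  moreover have "\<gamma>' = \<gamma>" using plus \<open>H' x = H x\<close> by simp
  ultimately show ?thesis using E[of x t] E'[of x t] by simp
qed

text \<open>Write G = H^2/\<gamma> + Q,
  where Q = G - H^2/\<gamma> is invariant along v and hence a sum of n - 1 squares of linear forms
  vanishing at v; then apply the construction of weighted squares.\<close>
lemma cubes_with_invariant_remainder:
  assumes p: "\<And>x. p x = cform {..<n} c x" and r: "r < n" "v r \<noteq> 0" and \<gamma>: "p v \<noteq> 0"
  shows "\<exists>L. (\<forall>j<n. linear_form n (L j)) \<and>
    (\<forall>x t. p (shift x t v) - (\<Sum>j<n. (L j (shift x t v))^3) = p x - (\<Sum>j<n. (L j x)^3))"
proof -
  define N where "N = {..<n}"
  define \<gamma> where "\<gamma> = p v"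
  obtain g \<eta> where "\<forall>x t. cform N c (shift x t v)
      = cform N c x + 3 * t * qform N g x + 3 * t^2 * lform N \<eta> x + t^3 * cform N c v"
    using cform_expansion by blast
  then have E: "p (shift x t v) = p x + 3 * t * qform N g x + 3 * t^2 * lform N \<eta> x + t^3 * \<gamma>" for x t
    by (simp add: p N_def \<gamma>_def)
  note G_shift = cubic_along_line(1)[OF E] and H_shift = cubic_along_line(2)[OF E]
  have "shift (\<lambda>k. 0) 1 v = v" by (simp add: shift_def)
  then have H_v: "lform N \<eta> v = \<gamma>" using H_shift[of "\<lambda>k. 0" 1] by (simp add: lform_def)
  define g1 where "g1 j k = g j k - \<eta> j * \<eta> k / \<gamma>" for j k
  have g1: "qform N g1 x = qform N g x - (lform N \<eta> x)^2 / \<gamma>" for x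
    unfolding g1_def qform_minus_square ..
  have inv: "qform N g1 (shift x t v) = qform N g1 x" for x t
    unfolding g1 using complete_square_invariant[OF G_shift H_shift] \<gamma> by (simp add: \<gamma>_def)
  have "finite N" "r \<in> N" using r by (simp_all add: N_def)
  moreover have "\<exists>b. \<forall>z. qform (N - {r}) g' z = (\<Sum>i<card (N - {r}). (lform (N - {r}) (b i) z)^2)"
    for g' using quadratic_sum_of_squares by (simp add: N_def)
  ultimately obtain b where b: "\<And>x. qform N g1 x = (\<Sum>i<card N - 1. (lform N (b i) x)^2)"
      and b_v: "\<And>i. lform N (b i) v = 0"
    using invariant_quadratic_squares[of N r v g1, OF _ _ r(2) inv] by blast
  have "linear_form n (lform N \<eta>)" "\<forall>i<n - 1. linear_form n (lform N (b i))"
    by (auto simp: linear_form_iff_lform N_def)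
  then obtain L where L: "\<forall>j<Suc (n - 1). linear_form n (L j)"
    and L_sum: "\<And>x. (\<Sum>j<Suc (n - 1). L j v * (L j x)^2)
                  = 1 / \<gamma> * (lform N \<eta> x)^2 + (\<Sum>i<n - 1. (lform N (b i) x)^2)"
    using squares_as_weighted_squares[of n "lform N \<eta>" "n - 1" "\<lambda>i. lform N (b i)" v "1 / \<gamma>"]
      b_v H_v \<gamma> by (auto simp: \<gamma>_def)
  have n: "Suc (n - 1) = n" using r by simp
  have "(\<Sum>j<n. L j v * (L j x)^2) = qform N g x" for x
    using L_sum[of x] b[of x] g1[of x] n by (simp add: N_def)
  then show ?thesis using cubes_remainder_invariant[OF E, of n n L] L n by auto
qed

lemma cform_cong: "(\<And>k. k \<in> V \<Longrightarrow> z k = z' k) \<Longrightarrow> cform V c z = cform V c z'"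
  unfolding cform_def by simp

lemma cform_diff: "cform V c1 x - cform V c2 x = cform V (\<lambda>i j k. c1 i j k - c2 i j k) x"
  unfolding cform_def by (simp add: sum_subtractf algebra_simps)

lemma cform_sum: "(\<Sum>l<(m::nat). cform V (C l) x) = cform V (\<lambda>i j k. \<Sum>l<m. C l i j k) x"
  by (induction m) (simp_all add: cform_def sum.distrib algebra_simps)

lemma cubic_form_minus_cubes:
  fixes m :: nat
  assumes p: "cubic_form n p" and L: "\<forall>j<m. linear_form n (L j)"
  shows "cubic_form n (\<lambda>x. p x - (\<Sum>j<m. (L j x)^3))"
proof -
  obtain c where c: "\<And>x. p x = cform {..<n} c x"
    using p by (auto simp: cubic_form_def cubic_form_on_iff_cform)
  have "\<forall>j. \<exists>a. j < m \<longrightarrow> (\<forall>x. L j x = lform {..<n} a x)" using L by (auto simp: linear_form_iff_lform)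
  then obtain A where A: "\<And>j x. j < m \<Longrightarrow> L j x = lform {..<n} (A j) x" by metis
  have cubes: "(\<Sum>j<m. (L j x)^3) = cform {..<n} (\<lambda>i i' k. \<Sum>l<m. A l i * A l i' * A l k) x" for x
  proof -
    have "(\<Sum>j<m. (L j x)^3) = (\<Sum>j<m. cform {..<n} (\<lambda>i i' k. A j i * A j i' * A j k) x)"
      by (intro sum.cong refl) (simp add: A lform_cube)
    also have "\<dots> = cform {..<n} (\<lambda>i i' k. \<Sum>l<m. A l i * A l i' * A l k) x"
      by (rule cform_sum)
    finally show ?thesis .
  qed
  have "p x - (\<Sum>j<m. (L j x)^3)
      = cform {..<n} (\<lambda>i i' k. c i i' k - (\<Sum>l<m. A l i * A l i' * A l k)) x" for x
    by (simp only: c cubes cform_diff)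
  then show ?thesis unfolding cubic_form_def cubic_form_on_iff_cform by blast
qed

definition swap0 :: "nat \<Rightarrow> nat \<Rightarrow> nat" where
  "swap0 r i = (if i = 0 then r else if i = r then 0 else i)"

lemma swap0_swap0 [simp]: "swap0 r (swap0 r i) = i"
  by (simp add: swap0_def)

lemma swap0_less: "r < n \<Longrightarrow> i < n \<Longrightarrow> swap0 r i < n"
  by (simp add: swap0_def)

lemma swap0_eq_0: "swap0 r i = 0 \<longleftrightarrow> i = r"
  by (auto simp: swap0_def)

lemma swap0_image: "r < n \<Longrightarrow> swap0 r ` {1..<n} = {..<n} - {r}"
  by (auto simp: swap0_def image_iff intro: bexI[of _ 0])

text \<open>The change of variables adapted to a direction v with v r \<noteq> 0: the new coordinates are
  y_0 = x_r / v_r and, for j \<ge> 1, the coordinate j' = swap0 r j of the projection of x along v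
  onto the hyperplane x_r = 0.  Its inverse is x_j = v_j y_0 + y_(swap0 r j) for j \<noteq> r.\<close>
definition elim_coords :: "(nat \<Rightarrow> complex) \<Rightarrow> nat \<Rightarrow> nat \<Rightarrow> nat \<Rightarrow> complex" where
  "elim_coords v r j k = (if j = 0 then (if k = r then 1 / v r else 0)
     else (if k = swap0 r j then 1 else 0) - (if k = r then v (swap0 r j) / v r else 0))"

definition elim_coords_inv :: "(nat \<Rightarrow> complex) \<Rightarrow> nat \<Rightarrow> nat \<Rightarrow> nat \<Rightarrow> complex" where
  "elim_coords_inv v r j k = (if k = 0 then v j else if j = swap0 r k then 1 else 0)"

lemma elim_coords_apply:
  assumes "r < n" "j < n"
  shows "(\<Sum>k<n. elim_coords v r j k * u k)
    = (if j = 0 then u r / v r else u (swap0 r j) - v (swap0 r j) * u r / v r)"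
proof (cases "j = 0")
  case True
  have "(\<Sum>k<n. elim_coords v r j k * u k) = (\<Sum>k<n. if k = r then u k / v r else 0)"
    by (rule sum.cong) (auto simp: elim_coords_def True)
  then show ?thesis using assms True by simp
next
  case False
  have "(\<Sum>k<n. elim_coords v r j k * u k) = (\<Sum>k<n. (if k = swap0 r j then u k else 0)
      - (if k = r then v (swap0 r j) * u k / v r else 0))"
    by (rule sum.cong) (auto simp: elim_coords_def False)
  then show ?thesis using assms False swap0_less[OF assms] by (simp add: sum_subtractf)
qed

lemma elim_coords_inv_apply:
  assumes "r < n" "j < n"
  shows "(\<Sum>k<n. elim_coords_inv v r j k * u k) = v j * u 0 + (if j = r then 0 else u (swap0 r j))"
proof -
  have "(\<Sum>k<n. elim_coords_inv v r j k * u k) = (\<Sum>k<n. (if k = 0 then v j * u k else 0)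
      + (if k = swap0 r j \<and> j \<noteq> r then u k else 0))"
    by (rule sum.cong) (auto simp: elim_coords_inv_def swap0_def)
  also have "\<dots> = v j * u 0 + (if j = r then 0 else u (swap0 r j))"
    using assms swap0_less[OF assms] by (simp add: sum.distrib)
  finally show ?thesis .
qed

lemma elim_coords_right_inverse:
  assumes "r < n" "v r \<noteq> 0" "j < n" "i < n"
  shows "(\<Sum>k<n. elim_coords v r j k * elim_coords_inv v r k i) = (if j = i then 1 else 0)"
  using assms unfolding elim_coords_apply[OF assms(1,3)]
  by (auto simp: elim_coords_inv_def swap0_def)

lemma elim_coords_left_inverse:
  assumes "r < n" "v r \<noteq> 0" "j < n" "i < n"
  shows "(\<Sum>k<n. elim_coords_inv v r j k * elim_coords v r k i) = (if j = i then 1 else 0)"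
  using assms unfolding elim_coords_inv_apply[OF assms(1,3)]
  by (auto simp: elim_coords_def swap0_def)

lemma invariant_cubic_fewer_variables:
  assumes R: "cubic_form n R" and r: "r < n" "v r \<noteq> 0"
    and inv: "\<And>x t. R (shift x t v) = R x"
  shows "\<exists>q. cubic_form_on {1..<n} q \<and> (\<forall>x. R x = q (\<lambda>j. \<Sum>k<n. elim_coords v r j k * x k))"
proof -
  define N where "N = {..<n}"
  define W where "W = N - {r}"
  obtain c where c: "\<And>x. R x = cform N c x"
    using R by (auto simp: cubic_form_def cubic_form_on_iff_cform N_def)
  define q where "q z = cform {1..<n} (\<lambda>a b d. c (swap0 r a) (swap0 r b) (swap0 r d)) z" for z
  have q_swap: "q z = cform W c (\<lambda>j. z (swap0 r j))" for z
  proof -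
    have "W = swap0 r ` {1..<n}" using swap0_image[OF r(1)] by (simp add: W_def N_def)
    moreover have "inj_on (swap0 r) {1..<n}" by (metis inj_on_inverseI swap0_swap0)
    ultimately show ?thesis unfolding q_def cform_def by (simp add: sum.reindex)
  qed
  have "R x = q (\<lambda>j. \<Sum>k<n. elim_coords v r j k * x k)" for x
  proof -
    have "R x = cform N c (proj_along v r x)" using inv by (simp add: c invariant_proj_along)
    also have "\<dots> = cform W c (proj_along v r x)"
      unfolding W_def using r by (intro cform_remove) (simp_all add: N_def proj_along_coord)
    also have "\<dots> = q (\<lambda>j. \<Sum>k<n. elim_coords v r j k * x k)"
      unfolding q_swap
    proof (rule cform_cong)
      fix j assume "j \<in> W"
      then have j: "j < n" "j \<noteq> r" by (auto simp: W_def N_def)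
      then have "swap0 r j \<noteq> 0" by (simp add: swap0_eq_0)
      then show "proj_along v r x j = (\<Sum>k<n. elim_coords v r (swap0 r j) k * x k)"
        unfolding elim_coords_apply[OF r(1) swap0_less[OF r(1) j(1)]]
        by (simp add: proj_along_def shift_def algebra_simps)
    qed
    finally show ?thesis .
  qed
  moreover have "cubic_form_on {1..<n} q"
    unfolding q_def cubic_form_on_iff_cform by blast
  ultimately show ?thesis by blast
qed

lemma cubic_cubes_plus_fewer_variables:
  assumes n: "n \<ge> 1" and p: "cubic_form n p"
  shows "\<exists>(\<Lambda> :: nat \<Rightarrow> nat \<Rightarrow> complex) (M :: nat \<Rightarrow> nat \<Rightarrow> complex).
            (\<forall>j<n. \<forall>i<n. (\<Sum>k<n. \<Lambda> j k * M k i) = (if j = i then 1 else 0)) \<and>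
            (\<forall>j<n. \<forall>i<n. (\<Sum>k<n. M j k * \<Lambda> k i) = (if j = i then 1 else 0)) \<and>
            (\<exists>(L :: nat \<Rightarrow> (nat \<Rightarrow> complex) \<Rightarrow> complex) q.
               (\<forall>j<n. linear_form n (L j)) \<and> cubic_form_on {1..<n} q \<and>
               (\<forall>x. p x = (\<Sum>j<n. (L j x) ^ 3) + q (\<lambda>j. \<Sum>k<n. \<Lambda> j k * x k)))"
proof -
  obtain v r L where r: "r < n" "v r \<noteq> 0" and L: "\<forall>j<n. linear_form n (L j)"
    and inv: "\<And>x t. p (shift x t v) - (\<Sum>j<n. (L j (shift x t v))^3) = p x - (\<Sum>j<n. (L j x)^3)"
  proof (cases "\<forall>x. p x = 0")
    case True
    have "linear_form n (\<lambda>x. 0)" unfolding linear_form_def by (intro exI[of _ "\<lambda>_. 0"]) simp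
    then show ?thesis using that[of 0 "\<lambda>k. 1" "\<lambda>j x. 0"] n True by simp
  next
    case False
    then obtain v where v: "p v \<noteq> 0" by blast
    obtain c where c: "\<And>x. p x = cform {..<n} c x"
      using p by (auto simp: cubic_form_def cubic_form_on_iff_cform)
    obtain r where "r < n" "v r \<noteq> 0" using cform_nonzero_coordinate[of "{..<n}" c v] v c by auto
    then show ?thesis using that cubes_with_invariant_remainder[OF c _ _ v] by blast
  qed
  obtain q where q: "cubic_form_on {1..<n} q"
    and pq: "\<forall>x. p x - (\<Sum>j<n. (L j x)^3) = q (\<lambda>j. \<Sum>k<n. elim_coords v r j k * x k)"
    using invariant_cubic_fewer_variables[OF cubic_form_minus_cubes[OF p L] r inv] by blast
  show ?thesis
  proof (intro exI conjI)
    show "\<forall>j<n. \<forall>i<n. (\<Sum>k<n. elim_coords v r j k * elim_coords_inv v r k i) = (if j = i then 1 else 0)"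
      using elim_coords_right_inverse[of r n v, OF r] by blast
    show "\<forall>j<n. \<forall>i<n. (\<Sum>k<n. elim_coords_inv v r j k * elim_coords v r k i) = (if j = i then 1 else 0)"
      using elim_coords_left_inverse[of r n v, OF r] by blast
    show "\<forall>x. p x = (\<Sum>j<n. (L j x)^3) + q (\<lambda>j. \<Sum>k<n. elim_coords v r j k * x k)"
      using pq by (simp add: algebra_simps)
  qed (use L q in auto)
qed

lemma cubic_form_on_shift_index:
  assumes "cubic_form_on {1..<Suc n} q"
  shows "\<exists>q'. cubic_form n q' \<and> (\<forall>z. q z = q' (\<lambda>i. z (Suc i)))"
proof -
  obtain c where c: "\<And>z. q z = cform {1..<Suc n} c z"
    using assms by (auto simp: cubic_form_on_iff_cform)
  define q' where "q' = cform {..<n} (\<lambda>i j k. c (Suc i) (Suc j) (Suc k))"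
  have "{1..<Suc n} = Suc ` {..<n}" by (simp add: atLeast0LessThan[symmetric])
  then have "q z = q' (\<lambda>i. z (Suc i))" for z
    unfolding c q'_def cform_def by (simp add: sum.reindex)
  moreover have "cubic_form n q'" unfolding q'_def cubic_form_def cubic_form_on_iff_cform by blast
  ultimately show ?thesis by blast
qed

lemma sum_lessThan_add_split: "(\<Sum>i<a + (m::nat). f i) = (\<Sum>i<a. f i) + (\<Sum>i<m. f (a + i))"
  by (induction m) (simp_all add: algebra_simps)

text \<open>Second part: iterating the first part on the cubic form q in n - 1 variables,
  p is a sum of at most n + (n - 1) + ... + 1 = (n + 1) choose 2 cubes.\<close>
lemma cubic_sum_of_cubes:
  assumes "cubic_form n p"
  shows "\<exists>m (L :: nat \<Rightarrow> (nat \<Rightarrow> complex) \<Rightarrow> complex).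
            m \<le> (n + 1) choose 2 \<and> (\<forall>i<m. linear_form n (L i)) \<and>
            (\<forall>x. p x = (\<Sum>i<m. (L i x) ^ 3))"
  using assms
proof (induction n arbitrary: p)
  case 0
  then have "\<forall>x. p x = 0" by (simp add: cubic_form_def cubic_form_on_def)
  then show ?case by (intro exI[of _ 0]) auto
next
  case (Suc n)
  obtain \<Lambda> L q where L: "\<forall>j<Suc n. linear_form (Suc n) (L j)" and q: "cubic_form_on {1..<Suc n} q"
    and pq: "\<forall>x. p x = (\<Sum>j<Suc n. (L j x) ^ 3) + q (\<lambda>j. \<Sum>k<Suc n. \<Lambda> j k * x k)"
    using cubic_cubes_plus_fewer_variables[of "Suc n" p] Suc.prems by auto
  obtain q' where q': "cubic_form n q'" and q_q': "\<And>z. q z = q' (\<lambda>i. z (Suc i))"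
    using cubic_form_on_shift_index[OF q] by blast
  from Suc.IH[OF q'] obtain m' L' where m': "m' \<le> (n + 1) choose 2"
    and L': "\<forall>i<m'. linear_form n (L' i)" and q'_cubes: "\<forall>x. q' x = (\<Sum>i<m'. (L' i x) ^ 3)" by blast
  define L2 where "L2 i = (if i < Suc n then L i
      else (\<lambda>x. L' (i - Suc n) (\<lambda>k. \<Sum>l<Suc n. \<Lambda> (Suc k) l * x l)))" for i
  show ?case
  proof (intro exI[of _ "Suc n + m'"] exI[of _ L2] conjI allI impI)
    have "(Suc n + 1) choose 2 = Suc n + ((n + 1) choose 2)"
      using binomial_Suc_Suc[of "Suc n" 1] by (simp add: numeral_2_eq_2)
    then show "Suc n + m' \<le> (Suc n + 1) choose 2" using m' by simp
    fix i assume "i < Suc n + m'"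
    then show "linear_form (Suc n) (L2 i)"
      using L L' linear_form_comp[of n "L' (i - Suc n)" "Suc n"] by (auto simp: L2_def)
  next
    fix x
    have "p x = (\<Sum>j<Suc n. (L j x) ^ 3) + (\<Sum>i<m'. (L' i (\<lambda>k. \<Sum>l<Suc n. \<Lambda> (Suc k) l * x l)) ^ 3)"
      using pq q_q' q'_cubes by simp
    also have "\<dots> = (\<Sum>i<Suc n + m'. (L2 i x) ^ 3)"
      unfolding sum_lessThan_add_split by (simp add: L2_def)
    finally show "p x = (\<Sum>i<Suc n + m'. (L2 i x) ^ 3)" .
  qed
qed

theorem theorem6p2:
  fixes n :: nat and p :: "(nat \<Rightarrow> complex) \<Rightarrow> complex"
  assumes "n \<ge> 1" and "cubic_form n p"
  shows "(\<exists>(\<Lambda> :: nat \<Rightarrow> nat \<Rightarrow> complex) (M :: nat \<Rightarrow> nat \<Rightarrow> complex).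
            (\<forall>j<n. \<forall>i<n. (\<Sum>k<n. \<Lambda> j k * M k i) = (if j = i then 1 else 0)) \<and>
            (\<forall>j<n. \<forall>i<n. (\<Sum>k<n. M j k * \<Lambda> k i) = (if j = i then 1 else 0)) \<and>
            (\<exists>(L :: nat \<Rightarrow> (nat \<Rightarrow> complex) \<Rightarrow> complex) q.
               (\<forall>j<n. linear_form n (L j)) \<and> cubic_form_on {1..<n} q \<and>
               (\<forall>x. p x = (\<Sum>j<n. (L j x) ^ 3) + q (\<lambda>j. \<Sum>k<n. \<Lambda> j k * x k))))
       \<and> (\<exists>m (L :: nat \<Rightarrow> (nat \<Rightarrow> complex) \<Rightarrow> complex).
            m \<le> (n + 1) choose 2 \<and> (\<forall>i<m. linear_form n (L i)) \<and>
            (\<forall>x. p x = (\<Sum>i<m. (L i x) ^ 3)))"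
  using cubic_cubes_plus_fewer_variables[OF assms] cubic_sum_of_cubes[OF assms(2)] by blast

end
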